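(* Let $V:[0,\infty)\to\mathbb{R}$ be càdlàg with finite variation on compact intervals. Then the set of complex levels for $V$ has zero Lebesgue measure.
   Context: $V(t-)$ denotes the left limit and $\Delta V(t)=V(t)-V(t-)$. A level $x\in\mathbb{R}$ is called simple for $V$ if two conditions hold. First, the set $\{t>0: V(t-)<x<V(t)\text{ or }V(t)<x<V(t-)\text{ or }V(t)=x\}$ is discrete, i.e. has no accumulation point in $[0,\infty)$. Second, there is no $t>0$ with $\Delta V(t)\neq0$ and $x\in\{V(t),V(t-)\}$. A level that is not simple is called complex. *)

theory Defs
  imports "HOL-Analysis.Analysis"
begin

definition left_lim :: "(real \<Rightarrow> real) \<Rightarrow> real \<Rightarrow> real" where
  "left_lim V t = Lim (at_left t) V"

definition jump :: "(real \<Rightarrow> real) \<Rightarrow> real \<Rightarrow> real" where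
  "jump V t = V t - left_lim V t"

definition cadlag_on_nonneg :: "(real \<Rightarrow> real) \<Rightarrow> bool" where
  "cadlag_on_nonneg V \<longleftrightarrow>
     (\<forall>t\<ge>0. (V \<longlongrightarrow> V t) (at_right t)) \<and>
     (\<forall>t>0. \<exists>l. (V \<longlongrightarrow> l) (at_left t))"

definition bounded_variation_on :: "(real \<Rightarrow> real) \<Rightarrow> real \<Rightarrow> real \<Rightarrow> bool" where
  "bounded_variation_on V a b \<longleftrightarrow>
     (\<exists>M. \<forall>(n::nat) (p::nat \<Rightarrow> real).
        p 0 = a \<and> p n = b \<and> (\<forall>i<n. p i \<le> p (Suc i)) \<longrightarrow>
        (\<Sum>i<n. \<bar>V (p (Suc i)) - V (p i)\<bar>) \<le> M)"

definition finite_variation_on_compacts :: "(real \<Rightarrow> real) \<Rightarrow> bool" where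
  "finite_variation_on_compacts V \<longleftrightarrow> (\<forall>T\<ge>0. bounded_variation_on V 0 T)"

definition crossing_set :: "(real \<Rightarrow> real) \<Rightarrow> real \<Rightarrow> real set" where
  "crossing_set V x = {t. t > 0 \<and>
      ((left_lim V t < x \<and> x < V t) \<or> (V t < x \<and> x < left_lim V t) \<or> V t = x)}"

definition simple_level :: "(real \<Rightarrow> real) \<Rightarrow> real \<Rightarrow> bool" where
  "simple_level V x \<longleftrightarrow>
     (\<forall>s\<ge>0. \<not> s islimpt crossing_set V x) \<and>
     \<not> (\<exists>t>0. jump V t \<noteq> 0 \<and> (x = V t \<or> x = left_lim V t))"

definition complex_level :: "(real \<Rightarrow> real) \<Rightarrow> real \<Rightarrow> bool" where
  "complex_level V x \<longleftrightarrow> \<not> simple_level V x"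

end

(*
  Fix T > 0 and let M bound the variation of V on [0,T]. For a uniform partition of [0,T]
  into k cells, the closed ranges [inf V, sup V] of V over the cells have total length at
  most M. A crossing at time t inside a cell puts the level x between V(t-) and V(t), hence
  in the range of that cell. So a level with N crossings in (0,T] lies, once k is large
  enough to separate them, in N of the ranges, and by Markov's inequality the set of such
  levels has measure at most M/N. Letting N grow, the levels with infinitely many crossings
  before T form a null set. Every other complex level is V(t) or V(t-) at one of the
  countably many jump times t.
*)

theory Submission
  imports Defs
begin

definition variation_le :: "(real \<Rightarrow> real) \<Rightarrow> real \<Rightarrow> real \<Rightarrow> real \<Rightarrow> bool" where
  "variation_le V a b M \<longleftrightarrow>
     (\<forall>(n::nat) (p::nat \<Rightarrow> real).
        p 0 = a \<and> p n = b \<and> (\<forall>i<n. p i \<le> p (Suc i)) \<longrightarrow>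
        (\<Sum>i<n. \<bar>V (p (Suc i)) - V (p i)\<bar>) \<le> M)"

lemma bounded_variation_on_iff_variation_le:
  "bounded_variation_on V a b \<longleftrightarrow> (\<exists>M. variation_le V a b M)"
  unfolding bounded_variation_on_def variation_le_def ..

lemma sum_every_third_le:
  fixes g :: "nat \<Rightarrow> real"
  assumes "\<And>j. g j \<ge> 0"
  shows "(\<Sum>i<k. g (3*i+1)) \<le> (\<Sum>j<3*k. g j)"
proof (induction k)
  case (Suc k)
  have "3 * Suc k = Suc (Suc (Suc (3*k)))" by simp
  then show ?case
    unfolding \<open>3 * Suc k = _\<close> using Suc assms[of "3*k"] assms[of "3*k+2"]
    by (simp add: sum.lessThan_Suc)
qed simp

lemma variation_le_sum_pairs:
  assumes M: "variation_le V a b M" and q: "q 0 = a" "q k = b"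
    and uv: "\<And>i. i < k \<Longrightarrow> u i \<in> {q i..q (Suc i)} \<and> v i \<in> {q i..q (Suc i)}"
  shows "(\<Sum>i<k. \<bar>V (u i) - V (v i)\<bar>) \<le> M"
proof -
  \<comment> \<open>Refine q by inserting min (u i) (v i) and max (u i) (v i) into the i-th cell;
      every third step of the refined partition is one of the pairs.\<close>
  define p where "p j = (let i = j div 3 in
     if j mod 3 = 0 then q i else if j mod 3 = 1 then min (u i) (v i) else max (u i) (v i))" for j
  have p: "p (3*i) = q i" "p (3*i+1) = min (u i) (v i)" "p (3*i+2) = max (u i) (v i)" for i
  proof -
    have "(3*i+1) div 3 = i" "(3*i+1) mod 3 = 1" "(3*i+2) div 3 = i" "(3*i+2) mod 3 = 2"
      by (simp_all add: mod_Suc)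
    then show "p (3*i) = q i" "p (3*i+1) = min (u i) (v i)" "p (3*i+2) = max (u i) (v i)"
      unfolding p_def Let_def by auto
  qed
  have mono: "p j \<le> p (Suc j)" if "j < 3*k" for j
  proof -
    obtain i r where ir: "j = 3*i + r" "r < 3" by (metis div_mult_mod_eq mod_less_divisor zero_less_numeral mult.commute)
    then have "i < k" using that by linarith
    then have cell: "u i \<in> {q i..q (Suc i)}" "v i \<in> {q i..q (Suc i)}" using uv by auto
    consider "r = 0" | "r = 1" | "r = 2" using ir by linarith
    then show ?thesis
    proof cases
      case 3
      then have "j = 3*i+2" "Suc j = 3 * Suc i" using ir by simp_all
      then have "p j = max (u i) (v i)" "p (Suc j) = q (Suc i)"
        using p(3)[of i] p(1)[of "Suc i"] by metis+
      then show ?thesis using cell by simp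
    qed (use ir p cell in auto)
  qed
  have "(\<Sum>i<k. \<bar>V (u i) - V (v i)\<bar>) = (\<Sum>i<k. \<bar>V (p (Suc (3*i+1))) - V (p (3*i+1))\<bar>)"
    using p by (intro sum.cong refl) (auto simp: max_def min_def abs_minus_commute)
  also have "\<dots> \<le> (\<Sum>j<3*k. \<bar>V (p (Suc j)) - V (p j)\<bar>)"
    by (rule sum_every_third_le) simp
  also have "\<dots> \<le> M"
    using M p(1)[of 0] p(1)[of k] q mono unfolding variation_le_def by simp
  finally show ?thesis .
qed

lemma variation_le_dist:
  assumes "variation_le V a b M" "t \<in> {a..b}"
  shows "\<bar>V t - V a\<bar> \<le> M"
  using variation_le_sum_pairs[OF assms(1), of "\<lambda>i. if i = 0 then a else b" 1 "\<lambda>_. t" "\<lambda>_. a"]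
    assms(2) by simp

lemma variation_le_bdd:
  assumes "variation_le V a b M" "S \<subseteq> {a..b}"
  shows "bdd_above (V ` S)" "bdd_below (V ` S)"
proof -
  have "V u \<le> V a + M" "V a - M \<le> V u" if "u \<in> S" for u
    using variation_le_dist[OF assms(1), of u] that assms(2) by auto
  then show "bdd_above (V ` S)" "bdd_below (V ` S)"
    by (meson bdd_aboveI2, meson bdd_belowI2)
qed

lemma partition_mono:
  fixes q :: "nat \<Rightarrow> 'a::preorder"
  assumes "\<And>i. i < k \<Longrightarrow> q i \<le> q (Suc i)" "i \<le> j" "j \<le> k"
  shows "q i \<le> q j"
  using assms(2,3)
proof (induction j rule: dec_induct)
  case (step n)
  then show ?case using assms(1)[of n] order_trans by fastforce
qed simp

lemma variation_le_oscillation_sum: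
  assumes M: "variation_le V a b M" and q: "q 0 = a" "q k = b" "\<And>i. i < k \<Longrightarrow> q i \<le> q (Suc i)"
  shows "(\<Sum>i<k. Sup (V ` {q i..q (Suc i)}) - Inf (V ` {q i..q (Suc i)})) \<le> M"
proof -
  define cell where "cell i = {q i..q (Suc i)}" for i
  have cell_ne: "V ` cell i \<noteq> {}" if "i < k" for i
    using q(3)[OF that] by (simp add: cell_def)
  have cell_sub: "cell i \<subseteq> {a..b}" if "i < k" for i
    using partition_mono[of k q 0 i] partition_mono[of k q "Suc i" k] q that
    by (auto simp: cell_def)
  note bdd = variation_le_bdd[OF M cell_sub]
  show ?thesis unfolding cell_def[symmetric]
  proof (rule field_le_epsilon)
    fix e :: real assume e: "0 < e"
    define d where "d = e / (2 * real (Suc k))"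
    have d: "0 < d" using e by (simp add: d_def)
    have "\<forall>i\<in>{..<k}. \<exists>u\<in>cell i. Sup (V ` cell i) - d < V u"
    proof
      fix i assume "i \<in> {..<k}"
      then show "\<exists>u\<in>cell i. Sup (V ` cell i) - d < V u"
        using less_cSup_iff[OF cell_ne bdd(1), of i "Sup (V ` cell i) - d"] d by auto
    qed
    then obtain u where u: "\<And>i. i < k \<Longrightarrow> u i \<in> cell i \<and> Sup (V ` cell i) - d < V (u i)"
      by (metis lessThan_iff)
    have "\<forall>i\<in>{..<k}. \<exists>v\<in>cell i. V v < Inf (V ` cell i) + d"
    proof
      fix i assume "i \<in> {..<k}"
      then show "\<exists>v\<in>cell i. V v < Inf (V ` cell i) + d"
        using cInf_less_iff[OF cell_ne bdd(2), of i "Inf (V ` cell i) + d"] d by auto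
    qed
    then obtain v where v: "\<And>i. i < k \<Longrightarrow> v i \<in> cell i \<and> V (v i) < Inf (V ` cell i) + d"
      by (metis lessThan_iff)
    have "(\<Sum>i<k. Sup (V ` cell i) - Inf (V ` cell i)) \<le> (\<Sum>i<k. \<bar>V (u i) - V (v i)\<bar> + 2 * d)"
      using u v by (intro sum_mono) fastforce
    also have "\<dots> = (\<Sum>i<k. \<bar>V (u i) - V (v i)\<bar>) + real k * (2 * d)"
      by (simp add: sum.distrib)
    also have "\<dots> \<le> M + e"
    proof (rule add_mono)
      show "(\<Sum>i<k. \<bar>V (u i) - V (v i)\<bar>) \<le> M"
        using u v by (intro variation_le_sum_pairs[OF M q(1,2)]) (auto simp: cell_def)
      show "real k * (2 * d) \<le> e"
        using e by (simp add: d_def field_simps)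
    qed
    finally show "(\<Sum>i<k. Sup (V ` cell i) - Inf (V ` cell i)) \<le> M + e" .
  qed
qed

lemma often_covered_eq_Union:
  fixes C :: "nat \<Rightarrow> 'a set"
  shows "{x. N \<le> card {i. i < k \<and> x \<in> C i}} = (\<Union>J\<in>{J. J \<subseteq> {..<k} \<and> card J = N}. \<Inter>i\<in>J. C i)"
proof (intro equalityI subsetI)
  fix x assume "x \<in> {x. N \<le> card {i. i < k \<and> x \<in> C i}}"
  then obtain J where "J \<subseteq> {i. i < k \<and> x \<in> C i}" "card J = N"
    by (auto elim: obtain_subset_with_card_n)
  then show "x \<in> (\<Union>J\<in>{J. J \<subseteq> {..<k} \<and> card J = N}. \<Inter>i\<in>J. C i)" by auto
next
  fix x assume "x \<in> (\<Union>J\<in>{J. J \<subseteq> {..<k} \<and> card J = N}. \<Inter>i\<in>J. C i)"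
  then obtain J where J: "J \<subseteq> {..<k}" "card J = N" "\<forall>i\<in>J. x \<in> C i" by auto
  then have "card J \<le> card {i. i < k \<and> x \<in> C i}"
    by (intro card_mono) auto
  then show "x \<in> {x. N \<le> card {i. i < k \<and> x \<in> C i}}" using J by simp
qed

lemma closed_often_covered:
  fixes C :: "nat \<Rightarrow> 'a::topological_space set"
  assumes "\<And>i. i < k \<Longrightarrow> closed (C i)"
  shows "closed {x. N \<le> card {i. i < k \<and> x \<in> C i}}"
proof -
  have "finite {J. J \<subseteq> {..<k} \<and> card J = N}"
    by (rule finite_subset[of _ "Pow {..<k}"]) auto
  then show ?thesis
    unfolding often_covered_eq_Union using assms by (intro closed_UN closed_INT ballI) blast+
qed

lemma emeasure_often_covered_le:
  fixes C :: "nat \<Rightarrow> 'a set"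
  assumes "\<And>i. i < k \<Longrightarrow> C i \<in> sets M"
  shows "of_nat N * emeasure M {x \<in> space M. N \<le> card {i. i < k \<and> x \<in> C i}}
           \<le> (\<Sum>i<k. emeasure M (C i))"
proof (cases "{x \<in> space M. N \<le> card {i. i < k \<and> x \<in> C i}} \<in> sets M")
  case True
  define E where "E = {x \<in> space M. N \<le> card {i. i < k \<and> x \<in> C i}}"
  have count: "of_nat N * indicator E x \<le> (\<Sum>i<k. indicator (C i) x :: ennreal)" for x
  proof -
    have "(\<Sum>i<k. indicator (C i) x :: ennreal) = of_nat (card ({..<k} \<inter> {i. x \<in> C i}))"
      unfolding indicator_def by simp
    also have "{..<k} \<inter> {i. x \<in> C i} = {i. i < k \<and> x \<in> C i}" by auto
    finally show ?thesis by (cases "x \<in> E") (simp_all add: E_def)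
  qed
  have "of_nat N * emeasure M E = (\<integral>\<^sup>+x. of_nat N * indicator E x \<partial>M)"
    using True unfolding E_def by (rule nn_integral_cmult_indicator[symmetric])
  also have "\<dots> \<le> (\<integral>\<^sup>+x. (\<Sum>i<k. indicator (C i) x) \<partial>M)"
    by (intro nn_integral_mono count)
  also have "\<dots> = (\<Sum>i<k. emeasure M (C i))"
    using assms by (subst nn_integral_sum) (auto intro: sum.cong)
  finally show ?thesis unfolding E_def .
next
  case False
  then have "emeasure M {x \<in> space M. N \<le> card {i. i < k \<and> x \<in> C i}} = 0"
    by (rule emeasure_notin_sets)
  then show ?thesis by simp
qed

lemma null_sets_if_eventually_in_small_sets:
  fixes E :: "nat \<Rightarrow> nat \<Rightarrow> 'a set"
  assumes sets: "\<And>N k. E N k \<in> sets M"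
    and small: "\<And>N k. 0 < N \<Longrightarrow> 0 < k \<Longrightarrow> emeasure M (E N k) \<le> ennreal (c / real N)"
    and ev: "\<And>x N. x \<in> S \<Longrightarrow> eventually (\<lambda>k. x \<in> E N k) sequentially"
  shows "S \<in> null_sets (completion M)"
proof -
  define B where "B N = (\<Union>K. \<Inter>k\<in>{Suc K..}. E N k)" for N
  have B_sets: "B N \<in> sets M" for N
    unfolding B_def using sets by (intro sets.countable_UN sets.countable_INT') auto
  have B_small: "emeasure M (B N) \<le> ennreal (c / real N)" if "0 < N" for N
  proof -
    have "emeasure M (B N) = (SUP K. emeasure M (\<Inter>k\<in>{Suc K..}. E N k))"
      unfolding B_def using sets
      by (intro SUP_emeasure_incseq[symmetric]) (auto intro!: sets.countable_INT' simp: incseq_def)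
    also have "\<dots> \<le> ennreal (c / real N)"
    proof (rule SUP_least)
      fix K
      have "emeasure M (\<Inter>k\<in>{Suc K..}. E N k) \<le> emeasure M (E N (Suc K))"
        using sets by (intro emeasure_mono) auto
      also have "\<dots> \<le> ennreal (c / real N)" using small that by simp
      finally show "emeasure M (\<Inter>k\<in>{Suc K..}. E N k) \<le> ennreal (c / real N)" .
    qed
    finally show ?thesis .
  qed
  define Z where "Z = (\<Inter>N. B (Suc N))"
  have Z_sets: "Z \<in> sets M"
    unfolding Z_def using B_sets by auto
  have "(\<lambda>N. ennreal (c / real (Suc N))) \<longlonglongrightarrow> ennreal 0"
    by (intro tendsto_ennrealI LIMSEQ_Suc lim_const_over_n)
  moreover have "emeasure M Z \<le> ennreal (c / real (Suc N))" for N
  proof -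
    have "emeasure M Z \<le> emeasure M (B (Suc N))"
      using B_sets by (intro emeasure_mono) (auto simp: Z_def)
    then show ?thesis using B_small[of "Suc N"] by simp
  qed
  ultimately have "emeasure M Z \<le> 0"
    by (intro LIMSEQ_le_const[of "\<lambda>N. ennreal (c / real (Suc N))"]) auto
  then have "Z \<in> null_sets M" using Z_sets by (simp add: null_setsI)
  moreover have "S \<subseteq> Z"
  proof
    fix x assume "x \<in> S"
    show "x \<in> Z" unfolding Z_def B_def
    proof
      fix N
      obtain K where "\<forall>k\<ge>K. x \<in> E (Suc N) k"
        using ev[OF \<open>x \<in> S\<close>, of "Suc N"] unfolding eventually_sequentially by blast
      then have "x \<in> (\<Inter>k\<in>{Suc K..}. E (Suc N) k)" by auto
      then show "x \<in> (\<Union>K. \<Inter>k\<in>{Suc K..}. E (Suc N) k)" by blast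
    qed
  qed
  ultimately show ?thesis by (blast intro: null_sets_completion_subset null_sets_completionI)
qed

lemma cadlag_left_lim:
  assumes "cadlag_on_nonneg V" "t > 0"
  shows "(V \<longlongrightarrow> left_lim V t) (at_left t)"
proof -
  obtain l where "(V \<longlongrightarrow> l) (at_left t)"
    using assms unfolding cadlag_on_nonneg_def by blast
  then show ?thesis
    unfolding left_lim_def using tendsto_Lim trivial_limit_at_left_real by blast
qed

lemma left_lim_in_range:
  assumes cad: "cadlag_on_nonneg V" and t: "0 < t" "a < t"
    and range: "\<And>u. u \<in> {a<..<t} \<Longrightarrow> V u \<in> {lo..hi}"
  shows "left_lim V t \<in> {lo..hi}"
proof -
  have lim: "(V \<longlongrightarrow> left_lim V t) (at_left t)" by (rule cadlag_left_lim[OF cad t(1)])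
  have ev: "eventually (\<lambda>u. V u \<in> {lo..hi}) (at_left t)"
    using eventually_at_left_real[OF t(2)] by eventually_elim (use range in auto)
  have "lo \<le> left_lim V t"
    by (rule tendsto_lowerbound[OF lim]) (use ev trivial_limit_at_left_real in \<open>auto elim: eventually_mono\<close>)
  moreover have "left_lim V t \<le> hi"
    by (rule tendsto_upperbound[OF lim]) (use ev trivial_limit_at_left_real in \<open>auto elim: eventually_mono\<close>)
  ultimately show ?thesis by simp
qed

lemma crossing_level_in_range:
  assumes cad: "cadlag_on_nonneg V" and t: "t \<in> crossing_set V x" "a < t" "t \<le> b"
    and range: "\<And>u. u \<in> {a..b} \<Longrightarrow> V u \<in> {lo..hi}"
  shows "x \<in> {lo..hi}"
proof -
  have "0 < t" using t(1) by (simp add: crossing_set_def)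
  moreover have "V u \<in> {lo..hi}" if "u \<in> {a<..<t}" for u
    using that t(3) by (intro range) auto
  ultimately have "left_lim V t \<in> {lo..hi}"
    by (intro left_lim_in_range[OF cad _ t(2)])
  moreover have "V t \<in> {lo..hi}" using t by (intro range) simp
  ultimately show ?thesis using t(1) by (auto simp: crossing_set_def)
qed

lemma jump_le_of_close_values:
  assumes cad: "cadlag_on_nonneg V" and t: "0 < t" "t \<in> {a<..<b}"
    and close: "\<And>u. u \<in> {a<..<b} \<Longrightarrow> \<bar>V u - c\<bar> \<le> e"
  shows "\<bar>jump V t\<bar> \<le> 2 * e"
proof -
  have "V u \<in> {c - e..c + e}" if "u \<in> {a<..<t}" for u
    using close[of u] that t by (auto simp: abs_le_iff)
  then have "left_lim V t \<in> {c - e..c + e}"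
    using t by (intro left_lim_in_range[OF cad t(1), of a]) auto
  moreover have "\<bar>V t - c\<bar> \<le> e" using t by (intro close)
  ultimately show ?thesis unfolding jump_def by auto
qed

lemma cadlag_small_jumps_nearby:
  assumes cad: "cadlag_on_nonneg V" and s: "0 \<le> s" and e: "0 < e"
  shows "\<exists>d>0. \<forall>t. 0 < t \<and> t \<noteq> s \<and> \<bar>t - s\<bar> < d \<longrightarrow> \<bar>jump V t\<bar> \<le> e"
proof -
  have "eventually (\<lambda>u. dist (V u) (V s) < e/2) (at_right s)"
    using cad s e unfolding cadlag_on_nonneg_def by (intro tendstoD) auto
  then obtain b where b: "s < b" "\<And>u. u \<in> {s<..<b} \<Longrightarrow> \<bar>V u - V s\<bar> \<le> e/2"
    unfolding eventually_at_right_field dist_real_def by (auto intro: less_imp_le)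
  have right: "\<bar>jump V t\<bar> \<le> e" if "t \<in> {s<..<b}" for t
    using jump_le_of_close_values[OF cad _ that b(2)] that s by simp
  obtain a where a: "a < s" and left: "\<And>t. 0 < t \<Longrightarrow> t \<in> {a<..<s} \<Longrightarrow> \<bar>jump V t\<bar> \<le> e"
  proof (cases "s = 0")
    case True
    then show ?thesis using that[of "-1"] by simp
  next
    case False
    then have "(V \<longlongrightarrow> left_lim V s) (at_left s)" using cadlag_left_lim[OF cad] s by simp
    then have "eventually (\<lambda>u. dist (V u) (left_lim V s) < e/2) (at_left s)"
      using e by (intro tendstoD) auto
    then obtain a where a: "a < s" "\<And>u. u \<in> {a<..<s} \<Longrightarrow> \<bar>V u - left_lim V s\<bar> \<le> e/2"
      unfolding eventually_at_left_field dist_real_def by (auto intro: less_imp_le)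
    show ?thesis
      using jump_le_of_close_values[OF cad _ _ a(2)] by (intro that[OF a(1)]) simp
  qed
  show ?thesis
  proof (intro exI conjI allI impI)
    show "0 < min (b - s) (s - a)" using a b by simp
    fix t assume "0 < t \<and> t \<noteq> s \<and> \<bar>t - s\<bar> < min (b - s) (s - a)"
    then show "\<bar>jump V t\<bar> \<le> e" using right left by (cases "s < t") auto
  qed
qed

lemma finite_big_jumps:
  assumes cad: "cadlag_on_nonneg V" and e: "0 < e"
  shows "finite {t. 0 < t \<and> t \<le> T \<and> e < \<bar>jump V t\<bar>}" (is "finite ?S")
proof (rule ccontr)
  assume inf: "infinite ?S"
  have "?S \<subseteq> {0..T}" by auto
  then obtain s where s: "s \<in> {0..T}" "s islimpt ?S"
    using Heine_Borel_imp_Bolzano_Weierstrass[OF compact_Icc inf] by blast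
  obtain d where d: "0 < d" "\<And>t. 0 < t \<Longrightarrow> t \<noteq> s \<Longrightarrow> \<bar>t - s\<bar> < d \<Longrightarrow> \<bar>jump V t\<bar> \<le> e"
    using cadlag_small_jumps_nearby[OF cad _ e, of s] s(1) by auto
  obtain y where y: "y \<in> ?S" "y \<noteq> s" "dist y s < d"
    using s(2) d(1) unfolding islimpt_approachable by blast
  then have "\<bar>jump V y\<bar> \<le> e" using d(2) by (simp add: dist_real_def)
  then show False using y(1) by simp
qed

lemma countable_jumps:
  assumes cad: "cadlag_on_nonneg V"
  shows "countable {t. 0 < t \<and> jump V t \<noteq> 0}"
proof (rule countable_subset)
  show "{t. 0 < t \<and> jump V t \<noteq> 0} \<subseteq>
      (\<Union>n::nat. \<Union>m::nat. {t. 0 < t \<and> t \<le> real n \<and> 1 / real (Suc m) < \<bar>jump V t\<bar>})"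
  proof
    fix t assume t: "t \<in> {t. 0 < t \<and> jump V t \<noteq> 0}"
    obtain n :: nat where "t \<le> real n" using real_arch_simple by blast
    moreover obtain m :: nat where "1 / real (Suc m) < \<bar>jump V t\<bar>"
      using t reals_Archimedean[of "\<bar>jump V t\<bar>"] by (auto simp: divide_inverse)
    ultimately show "t \<in> (\<Union>n::nat. \<Union>m::nat. {t. 0 < t \<and> t \<le> real n \<and> 1 / real (Suc m) < \<bar>jump V t\<bar>})"
      using t by blast
  qed
  show "countable (\<Union>n::nat. \<Union>m::nat. {t. 0 < t \<and> t \<le> real n \<and> 1 / real (Suc m) < \<bar>jump V t\<bar>})"
    by (intro countable_UN countableI_type countable_finite finite_big_jumps[OF cad]) simp
qed

lemma equal_partition_cell:
  fixes T t :: real and k :: nat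
  assumes "0 < T" "0 < k" "0 < t" "t \<le> T"
  shows "\<exists>i<k. T * real i / real k < t \<and> t \<le> T * real (Suc i) / real k"
proof -
  define q where "q = t * real k / T"
  have q: "0 < q" "q \<le> real k" using assms by (auto simp: q_def field_simps)
  define i where "i = nat \<lceil>q\<rceil> - 1"
  have "1 \<le> \<lceil>q\<rceil>" using q(1) by (simp add: le_ceiling_iff)
  then have i: "real i = of_int \<lceil>q\<rceil> - 1" unfolding i_def by linarith
  have "\<lceil>q\<rceil> \<le> int k" using q(2) by (simp add: ceiling_le_iff)
  then have "i < k" using \<open>1 \<le> \<lceil>q\<rceil>\<close> unfolding i_def by linarith
  moreover have "real i < q" "q \<le> real (Suc i)" using i ceiling_correct[of q] by auto
  ultimately show ?thesis
    using assms by (intro exI[of _ i]) (auto simp: q_def field_simps)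
qed

lemma eventually_finite_separated:
  fixes F :: "real set"
  assumes "finite F"
  shows "eventually (\<lambda>k. \<forall>t\<in>F. \<forall>t'\<in>F. t \<noteq> t' \<longrightarrow> c / real k < \<bar>t - t'\<bar>) sequentially"
  using assms
proof (intro eventually_ball_finite ballI)
  fix t t' assume "t \<in> F" "t' \<in> F"
  show "eventually (\<lambda>k. t \<noteq> t' \<longrightarrow> c / real k < \<bar>t - t'\<bar>) sequentially"
  proof (cases "t = t'")
    case False
    then have "0 < \<bar>t - t'\<bar>" by simp
    from order_tendstoD(2)[OF lim_const_over_n[of c] this] show ?thesis by eventually_elim simp
  qed simp
qed

definition uniform_cell :: "real \<Rightarrow> nat \<Rightarrow> nat \<Rightarrow> real set" where
  "uniform_cell T k i = {T * real i / real k..T * real (Suc i) / real k}"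

definition range_hull :: "(real \<Rightarrow> real) \<Rightarrow> real set \<Rightarrow> real set" where
  "range_hull V S = {Inf (V ` S)..Sup (V ` S)}"

lemma uniform_cell_subset:
  assumes "0 < T" "i < k"
  shows "uniform_cell T k i \<subseteq> {0..T}"
proof -
  have "T * real (Suc i) \<le> T * real k" using assms by (intro mult_left_mono) auto
  then show ?thesis using assms by (auto simp: uniform_cell_def divide_le_eq)
qed

lemma in_range_hull_variation_le:
  assumes "variation_le V 0 T M" "0 < T" "i < k" "u \<in> uniform_cell T k i"
  shows "V u \<in> range_hull V (uniform_cell T k i)"
  using variation_le_bdd[OF assms(1) uniform_cell_subset[OF assms(2,3)]] assms(4)
  by (auto simp: range_hull_def intro: cInf_lower cSup_upper)

lemma emeasure_often_in_range_hulls_le: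
  assumes M: "variation_le V 0 T M" and T: "0 < T" and N: "0 < N" and k: "0 < k"
  shows "emeasure lborel {x. N \<le> card {i. i < k \<and> x \<in> range_hull V (uniform_cell T k i)}}
           \<le> ennreal (M / real N)"
proof -
  define H where "H i = range_hull V (uniform_cell T k i)" for i
  have "0 \<le> M" using variation_le_dist[OF M, of 0] T by simp
  have lo_le_hi: "Inf (V ` uniform_cell T k i) \<le> Sup (V ` uniform_cell T k i)" if "i < k" for i
    using in_range_hull_variation_le[OF M T that, of "T * real i / real k"] T
    by (simp add: range_hull_def uniform_cell_def divide_right_mono)
  have "of_nat N * emeasure lborel {x. N \<le> card {i. i < k \<and> x \<in> H i}} \<le> (\<Sum>i<k. emeasure lborel (H i))"
    using emeasure_often_covered_le[of k H lborel N] by (simp add: H_def range_hull_def)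
  also have "\<dots> = ennreal (\<Sum>i<k. Sup (V ` uniform_cell T k i) - Inf (V ` uniform_cell T k i))"
    using lo_le_hi by (simp add: H_def range_hull_def) (rule sum_ennreal, simp)
  also have "\<dots> \<le> ennreal M"
    using variation_le_oscillation_sum[OF M, of "\<lambda>i. T * real i / real k" k] T k
    by (intro ennreal_leI) (simp add: uniform_cell_def divide_right_mono)
  also have "\<dots> = of_nat N * ennreal (M / real N)"
    using N \<open>0 \<le> M\<close> by (simp add: ennreal_of_nat_eq_real_of_nat ennreal_mult[symmetric])
  finally show ?thesis using N by (simp add: H_def ennreal_mult_le_mult_iff)
qed

lemma crossings_eventually_in_range_hulls:
  assumes cad: "cadlag_on_nonneg V" and M: "variation_le V 0 T M" and T: "0 < T"
    and F: "finite F" "F \<subseteq> crossing_set V x \<inter> {0<..T}"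
  shows "eventually (\<lambda>k. card F \<le> card {i. i < k \<and> x \<in> range_hull V (uniform_cell T k i)}) sequentially"
  using eventually_finite_separated[OF F(1), of T] eventually_gt_at_top[of "0::nat"]
proof eventually_elim
  case (elim k)
  define a where "a i = T * real i / real k" for i
  have "\<forall>t\<in>F. \<exists>i. i < k \<and> a i < t \<and> t \<le> a (Suc i)"
  proof
    fix t assume "t \<in> F"
    then have "0 < t" "t \<le> T" using F(2) by auto
    then show "\<exists>i. i < k \<and> a i < t \<and> t \<le> a (Suc i)"
      using equal_partition_cell[OF T elim(2)] unfolding a_def by blast
  qed
  then have "\<exists>idx. \<forall>t\<in>F. idx t < k \<and> a (idx t) < t \<and> t \<le> a (Suc (idx t))"
    by (rule bchoice)
  then obtain idx where idx: "\<forall>t\<in>F. idx t < k \<and> a (idx t) < t \<and> t \<le> a (Suc (idx t))"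
    by blast
  have x_in: "x \<in> range_hull V (uniform_cell T k (idx t))" if "t \<in> F" for t
  proof -
    have t: "t \<in> crossing_set V x" "a (idx t) < t" "t \<le> a (Suc (idx t))" "idx t < k"
      using F(2) idx that by auto
    show ?thesis
      using in_range_hull_variation_le[OF M T t(4)]
      unfolding range_hull_def uniform_cell_def a_def[symmetric]
      by (rule crossing_level_in_range[OF cad t(1-3)])
  qed
  have "inj_on idx F"
  proof (rule inj_onI, rule ccontr)
    fix t t' assume tt: "t \<in> F" "t' \<in> F" "idx t = idx t'" "t \<noteq> t'"
    have "a (Suc (idx t)) - a (idx t) = T / real k"
      by (simp add: a_def diff_divide_distrib[symmetric] algebra_simps)
    moreover have "a (idx t) < t" "t \<le> a (Suc (idx t))" "a (idx t) < t'" "t' \<le> a (Suc (idx t))"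
      using idx tt(1,2,3) by auto
    ultimately have "\<bar>t - t'\<bar> < T / real k" by (simp add: abs_less_iff)
    moreover have "T / real k < \<bar>t - t'\<bar>" using elim(1) tt(1,2,4) by blast
    ultimately show False by linarith
  qed
  then have "card F = card (idx ` F)" by (simp add: card_image)
  also have "\<dots> \<le> card {i. i < k \<and> x \<in> range_hull V (uniform_cell T k i)}"
  proof (rule card_mono)
    show "idx ` F \<subseteq> {i. i < k \<and> x \<in> range_hull V (uniform_cell T k i)}" using idx x_in by blast
  qed simp
  finally show ?case .
qed

lemma infinite_crossings_null:
  assumes cad: "cadlag_on_nonneg V" and bv: "bounded_variation_on V 0 T" and T: "0 < T"
  shows "{x. infinite (crossing_set V x \<inter> {0<..T})} \<in> null_sets lebesgue"
proof -
  obtain M where M: "variation_le V 0 T M"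
    using bv by (auto simp: bounded_variation_on_iff_variation_le)
  define E where "E N k = {x. N \<le> card {i. i < k \<and> x \<in> range_hull V (uniform_cell T k i)}}" for N k
  have "E N k \<in> sets lborel" for N k
    unfolding E_def sets_lborel by (intro borel_closed closed_often_covered) (simp add: range_hull_def)
  moreover have "emeasure lborel (E N k) \<le> ennreal (M / real N)" if "0 < N" "0 < k" for N k
    unfolding E_def using emeasure_often_in_range_hulls_le[OF M T that] .
  moreover have "eventually (\<lambda>k. x \<in> E N k) sequentially"
    if "x \<in> {x. infinite (crossing_set V x \<inter> {0<..T})}" for x N
  proof -
    have "infinite (crossing_set V x \<inter> {0<..T})" using that by simp
    then obtain F where F: "finite F" "card F = N" "F \<subseteq> crossing_set V x \<inter> {0<..T}"
      using infinite_arbitrarily_large by blast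
    have "eventually (\<lambda>k. card F \<le> card {i. i < k \<and> x \<in> range_hull V (uniform_cell T k i)}) sequentially"
      by (rule crossings_eventually_in_range_hulls[OF cad M T F(1,3)])
    then show ?thesis unfolding E_def F(2) by simp
  qed
  ultimately show ?thesis
    by (rule null_sets_if_eventually_in_small_sets)
qed

lemma complex_level_cases:
  assumes "complex_level V x"
  obtains n :: nat where "infinite (crossing_set V x \<inter> {0<..real (Suc n)})"
  | "x \<in> V ` {t. 0 < t \<and> jump V t \<noteq> 0} \<union> left_lim V ` {t. 0 < t \<and> jump V t \<noteq> 0}"
proof -
  consider s where "0 \<le> s" "s islimpt crossing_set V x"
    | "\<exists>t>0. jump V t \<noteq> 0 \<and> (x = V t \<or> x = left_lim V t)"
    using assms unfolding complex_level_def simple_level_def by blast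
  then show ?thesis
  proof cases
    case (1 s)
    obtain n :: nat where "s \<le> real n" using real_arch_simple by blast
    then have "crossing_set V x \<inter> ball s 1 \<subseteq> crossing_set V x \<inter> {0<..real (Suc n)}"
      by (auto simp: crossing_set_def dist_real_def)
    moreover have "infinite (crossing_set V x \<inter> ball s 1)"
      using 1(2) unfolding islimpt_eq_infinite_ball by simp
    ultimately show ?thesis using that(1) infinite_super by blast
  next
    case 2
    then show ?thesis using that(2) by blast
  qed
qed

theorem lemma1:
  fixes V :: "real \<Rightarrow> real"
  assumes "cadlag_on_nonneg V"
    and "finite_variation_on_compacts V"
  shows "{x. complex_level V x} \<in> null_sets lebesgue"
proof -
  define J where "J = {t. 0 < t \<and> jump V t \<noteq> 0}"
  have "{x. complex_level V x} \<subseteq>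
      (\<Union>n. {x. infinite (crossing_set V x \<inter> {0<..real (Suc n)})}) \<union> (V ` J \<union> left_lim V ` J)"
    unfolding J_def by (blast elim: complex_level_cases)
  moreover have "(\<Union>n. {x. infinite (crossing_set V x \<inter> {0<..real (Suc n)})}) \<in> null_sets lebesgue"
    using assms by (intro null_sets_UN infinite_crossings_null) (auto simp: finite_variation_on_compacts_def)
  moreover have "V ` J \<union> left_lim V ` J \<in> null_sets lebesgue"
    using countable_jumps[OF assms(1)] unfolding J_def
    by (intro null_sets_completionI countable_imp_null_set_lborel) auto
  ultimately show ?thesis
    by (blast intro: null_sets_completion_subset)
qed

end
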